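(* Let $\mathcal{B}$ be a bounding family on $[n]^d$ with associated function $d_{\mathcal{B}}$, and let $\mathcal{D}=\prod_{r=1}^d\mathcal{D}_r$ be a product distribution on $[n]^d$ such that $\mu_{\mathcal{D}_r}(j)=q_r(j)/N$ for positive integer $N$ and nonnegative integers $q_r(j)$. With $\Phi$, $f_{ext}$, $d_{ext}$ as defined in the context, for every $f:[n]^d\to\mathbb{R}$, $$\mathrm{dist}_{\mathcal{D}}(f,\mathcal{P}(d_{\mathcal{B}}))=\mathrm{dist}_{\mathcal{U}}(f_{ext},\mathcal{P}(d_{ext})),$$ where $\mathcal{U}$ is the uniform distribution on $[N]^d$.
   Context: A bounding family is a tuple of $2d$ functions $l_1,u_1,\dots,l_d,u_d:[n-1]\to\mathbb{R}$ with $l_r(y)<u_r(y)$; $d_{\mathcal{B}}(x,y)=\sum_{r:x_r>y_r}\sum_{t=y_r}^{x_r-1}u_r(t)-\sum_{r:x_r<y_r}\sum_{t=x_r}^{y_r-1}l_r(t)$. For a function $\delta$ on pairs of points of a domain $X$, $\mathcal{P}(\delta)$ is the set of $g:X\to\mathbb{R}$ with $g(x)-g(y)\le\delta(x,y)$ for all $x,y\in X$ (so $\mathcal{P}(d_{\mathcal{B}})$ is the set of $f$ with $l_r(x_r)\le f(x+\mathbf{e}_r)-f(x)\le u_r(x_r)$). For $t\in[N]$, $\phi_r(t)$ is the unique $\ell\in[n]$ with $\sum_{j<\ell}q_r(j)<t\le\sum_{j\le\ell}q_r(j)$, and $\Phi:[N]^d\to[n]^d$, $\Phi(x)=(\phi_1(x_1),\dots,\phi_d(x_d))$.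 Define $f_{ext}(x)=f(\Phi(x))$ and $d_{ext}(x,y)=d_{\mathcal{B}}(\Phi(x),\Phi(y))$ for $x,y\in[N]^d$. $\mathrm{dist}_{\mathcal{D}}(f,\mathcal{P})=\inf_{g\in\mathcal{P}}\Pr_{x\sim\mathcal{D}}[f(x)\ne g(x)]$. *)

theory Defs
  imports Complex_Main
begin

text \<open>Points of [n]^d are functions from a finite index type 'd (the coordinates
  1..d) to nat with all values in {1..n}.\<close>

definition grid :: "nat \<Rightarrow> ('d::finite \<Rightarrow> nat) set" where
  "grid n = {x. \<forall>r. x r \<in> {1..n}}"

definition bounding_family :: "nat \<Rightarrow> ('d \<Rightarrow> nat \<Rightarrow> real) \<Rightarrow> ('d \<Rightarrow> nat \<Rightarrow> real) \<Rightarrow> bool" where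
  "bounding_family n l u \<longleftrightarrow> (\<forall>r. \<forall>y\<in>{1..n-1}. l r y < u r y)"

definition dB :: "('d::finite \<Rightarrow> nat \<Rightarrow> real) \<Rightarrow> ('d \<Rightarrow> nat \<Rightarrow> real)
    \<Rightarrow> ('d \<Rightarrow> nat) \<Rightarrow> ('d \<Rightarrow> nat) \<Rightarrow> real" where
  "dB l u x y =
     (\<Sum>r\<in>{r. x r > y r}. \<Sum>t\<in>{y r..x r - 1}. u r t)
   - (\<Sum>r\<in>{r. x r < y r}. \<Sum>t\<in>{x r..y r - 1}. l r t)"

definition Pset :: "'a set \<Rightarrow> ('a \<Rightarrow> 'a \<Rightarrow> real) \<Rightarrow> ('a \<Rightarrow> real) set" where
  "Pset X \<delta> = {g. \<forall>x\<in>X. \<forall>y\<in>X. g x - g y \<le> \<delta> x y}"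

definition dist_distr :: "'a set \<Rightarrow> ('a \<Rightarrow> real) \<Rightarrow> ('a \<Rightarrow> real) \<Rightarrow> ('a \<Rightarrow> real) set \<Rightarrow> real" where
  "dist_distr X w f P = (INF g\<in>P. \<Sum>x\<in>{x\<in>X. f x \<noteq> g x}. w x)"

definition prod_pmf_weights :: "nat \<Rightarrow> ('d::finite \<Rightarrow> nat \<Rightarrow> nat) \<Rightarrow> ('d \<Rightarrow> nat) \<Rightarrow> real" where
  "prod_pmf_weights N q x = (\<Prod>r\<in>UNIV. real (q r (x r)) / real N)"

definition uniform_weights :: "nat \<Rightarrow> ('d::finite \<Rightarrow> nat) \<Rightarrow> real" where
  "uniform_weights N x = 1 / real N ^ card (UNIV :: 'd set)"

definition phi :: "nat \<Rightarrow> ('d \<Rightarrow> nat \<Rightarrow> nat) \<Rightarrow> 'd \<Rightarrow> nat \<Rightarrow> nat" where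
  "phi n q r t = (THE l. l \<in> {1..n} \<and> (\<Sum>j\<in>{1..<l}. q r j) < t \<and> t \<le> (\<Sum>j\<in>{1..l}. q r j))"

definition Phi :: "nat \<Rightarrow> ('d \<Rightarrow> nat \<Rightarrow> nat) \<Rightarrow> ('d \<Rightarrow> nat) \<Rightarrow> ('d \<Rightarrow> nat)" where
  "Phi n q x = (\<lambda>r. phi n q r (x r))"

definition f_ext :: "nat \<Rightarrow> ('d \<Rightarrow> nat \<Rightarrow> nat) \<Rightarrow> (('d \<Rightarrow> nat) \<Rightarrow> real) \<Rightarrow> ('d \<Rightarrow> nat) \<Rightarrow> real" where
  "f_ext n q f x = f (Phi n q x)"

definition d_ext :: "nat \<Rightarrow> ('d::finite \<Rightarrow> nat \<Rightarrow> nat) \<Rightarrow> ('d \<Rightarrow> nat \<Rightarrow> real) \<Rightarrow> ('d \<Rightarrow> nat \<Rightarrow> real)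
    \<Rightarrow> ('d \<Rightarrow> nat) \<Rightarrow> ('d \<Rightarrow> nat) \<Rightarrow> real" where
  "d_ext n q l u x y = dB l u (Phi n q x) (Phi n q y)"

end

theory Submission
  imports Defs "HOL-Library.FuncSet"
begin

text \<open>The map \<open>\<Phi>\<close> pushes the uniform distribution on \<open>[N]\<^sup>d\<close> forward to \<open>\<D>\<close>: its fibre over
  \<open>a\<close> is a box with \<open>\<Prod>\<^sub>r q\<^sub>r(a\<^sub>r)\<close> points. Hence \<open>g \<mapsto> g \<circ> \<Phi>\<close> maps \<open>\<P>(d\<^sub>\<B>)\<close> into \<open>\<P>(d\<^sub>e\<^sub>x\<^sub>t)\<close>
  without changing the distance to \<open>f\<close>. Conversely, since \<open>d\<^sub>\<B>\<close> vanishes on the diagonal,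
  every \<open>h \<in> \<P>(d\<^sub>e\<^sub>x\<^sub>t)\<close> is constant on the fibres, i.e. \<open>h = g\<^sub>0 \<circ> \<Phi>\<close> with \<open>g\<^sub>0\<close> satisfying the
  constraints on the image of \<open>\<Phi>\<close>. As \<open>d\<^sub>\<B>\<close> is a sum over coordinates of maxima of
  differences of potentials, it satisfies the triangle inequality, so the McShane extension
  \<open>g(x) = min\<^sub>a (g\<^sub>0(a) + d\<^sub>\<B>(x, a))\<close> lies in \<open>\<P>(d\<^sub>\<B>)\<close> and agrees with \<open>g\<^sub>0\<close> on the image.\<close>

lemma Pset_comp:
  assumes "\<Phi> ` Y \<subseteq> X" and "g \<in> Pset X \<delta>"
  shows "g \<circ> \<Phi> \<in> Pset Y (\<lambda>x y. \<delta> (\<Phi> x) (\<Phi> y))"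
  using assms unfolding Pset_def by auto

lemma Pset_pullback_factors:
  assumes refl: "\<And>x. x \<in> \<Phi> ` Y \<Longrightarrow> \<delta> x x = 0"
    and h: "h \<in> Pset Y (\<lambda>x y. \<delta> (\<Phi> x) (\<Phi> y))"
  obtains g0 where "\<And>y. y \<in> Y \<Longrightarrow> h y = g0 (\<Phi> y)"
    and "\<And>a b. a \<in> \<Phi> ` Y \<Longrightarrow> b \<in> \<Phi> ` Y \<Longrightarrow> g0 a - g0 b \<le> \<delta> a b"
proof -
  have constant_on_fibres: "h y = h y'" if "y \<in> Y" "y' \<in> Y" "\<Phi> y = \<Phi> y'" for y y'
  proof -
    have "h y - h y' \<le> 0" "h y' - h y \<le> 0"
      using h that refl[of "\<Phi> y"] unfolding Pset_def by force+
    then show ?thesis by simp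
  qed
  have factors: "h y = (h \<circ> inv_into Y \<Phi>) (\<Phi> y)" if "y \<in> Y" for y
    using constant_on_fibres[of y "inv_into Y \<Phi> (\<Phi> y)"] that
    by (simp add: inv_into_into f_inv_into_f)
  show thesis
  proof (rule that)
    show "h y = (h \<circ> inv_into Y \<Phi>) (\<Phi> y)" if "y \<in> Y" for y
      using factors that .
    show "(h \<circ> inv_into Y \<Phi>) a - (h \<circ> inv_into Y \<Phi>) b \<le> \<delta> a b"
      if "a \<in> \<Phi> ` Y" "b \<in> \<Phi> ` Y" for a b
      using that h factors unfolding Pset_def by auto
  qed
qed

lemma Pset_extension:
  assumes "finite S" "S \<noteq> {}" "S \<subseteq> X"
    and refl: "\<And>x. x \<in> S \<Longrightarrow> \<delta> x x = 0"
    and triangle: "\<And>x y z. x \<in> X \<Longrightarrow> y \<in> X \<Longrightarrow> z \<in> X \<Longrightarrow> \<delta> x z \<le> \<delta> x y + \<delta> y z"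
    and lip: "\<And>a b. a \<in> S \<Longrightarrow> b \<in> S \<Longrightarrow> g0 a - g0 b \<le> \<delta> a b"
  obtains g where "g \<in> Pset X \<delta>" "\<And>a. a \<in> S \<Longrightarrow> g a = g0 a"
proof -
  define g where "g x = Min ((\<lambda>a. g0 a + \<delta> x a) ` S)" for x
  have g_le: "g x \<le> g0 a + \<delta> x a" if "a \<in> S" for x a
    unfolding g_def using \<open>finite S\<close> that by (intro Min_le) auto
  have g_attained: "\<exists>b\<in>S. g x = g0 b + \<delta> x b" for x
  proof -
    have "g x \<in> (\<lambda>a. g0 a + \<delta> x a) ` S"
      unfolding g_def using \<open>finite S\<close> \<open>S \<noteq> {}\<close> by (intro Min_in) auto
    then show ?thesis by auto
  qed
  show thesis
  proof (rule that)
    show "g \<in> Pset X \<delta>"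
      unfolding Pset_def
    proof (intro CollectI ballI)
      fix x y assume "x \<in> X" "y \<in> X"
      obtain b where b: "b \<in> S" "g y = g0 b + \<delta> y b" using g_attained by blast
      have "g x \<le> g0 b + \<delta> x b" using g_le b(1) .
      also have "\<dots> \<le> g0 b + \<delta> x y + \<delta> y b"
        using triangle[of x y b] \<open>x \<in> X\<close> \<open>y \<in> X\<close> b(1) \<open>S \<subseteq> X\<close> by auto
      finally show "g x - g y \<le> \<delta> x y" using b(2) by simp
    qed
    show "g a = g0 a" if "a \<in> S" for a
    proof -
      obtain b where "b \<in> S" "g a = g0 b + \<delta> a b" using g_attained by blast
      then have "g0 a \<le> g a" using lip[of a b] \<open>a \<in> S\<close> by simp
      moreover have "g a \<le> g0 a" using g_le[OF \<open>a \<in> S\<close>, of a] refl \<open>a \<in> S\<close> by simp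
      ultimately show ?thesis by simp
    qed
  qed
qed

lemma dist_distr_pullback:
  assumes maps: "\<Phi> ` Y \<subseteq> X" and "finite Y" "Y \<noteq> {}"
    and refl: "\<And>x. x \<in> X \<Longrightarrow> \<delta> x x = 0"
    and triangle: "\<And>x y z. x \<in> X \<Longrightarrow> y \<in> X \<Longrightarrow> z \<in> X \<Longrightarrow> \<delta> x z \<le> \<delta> x y + \<delta> y z"
    and pushforward: "\<And>P. (\<Sum>y\<in>{y\<in>Y. P (\<Phi> y)}. w' y) = (\<Sum>x\<in>{x\<in>X. P x}. w x)"
  shows "dist_distr X w f (Pset X \<delta>)
       = dist_distr Y w' (f \<circ> \<Phi>) (Pset Y (\<lambda>x y. \<delta> (\<Phi> x) (\<Phi> y)))"
proof -
  define cost_X where "cost_X g = (\<Sum>x\<in>{x\<in>X. f x \<noteq> g x}. w x)" for g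
  define cost_Y where "cost_Y h = (\<Sum>y\<in>{y\<in>Y. (f \<circ> \<Phi>) y \<noteq> h y}. w' y)" for h
  have cost_comp: "cost_Y (g \<circ> \<Phi>) = cost_X g" for g
    unfolding cost_X_def cost_Y_def using pushforward[of "\<lambda>x. f x \<noteq> g x"] by simp
  have "cost_X ` Pset X \<delta> \<subseteq> cost_Y ` Pset Y (\<lambda>x y. \<delta> (\<Phi> x) (\<Phi> y))"
    using Pset_comp[OF maps] cost_comp by (metis image_eqI image_subsetI)
  moreover have "cost_Y ` Pset Y (\<lambda>x y. \<delta> (\<Phi> x) (\<Phi> y)) \<subseteq> cost_X ` Pset X \<delta>"
  proof (rule image_subsetI)
    fix h assume h: "h \<in> Pset Y (\<lambda>x y. \<delta> (\<Phi> x) (\<Phi> y))"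
    obtain g0 where g0: "\<And>y. y \<in> Y \<Longrightarrow> h y = g0 (\<Phi> y)"
      and lip: "\<And>a b. a \<in> \<Phi> ` Y \<Longrightarrow> b \<in> \<Phi> ` Y \<Longrightarrow> g0 a - g0 b \<le> \<delta> a b"
      using Pset_pullback_factors[of \<Phi> Y \<delta> h] h refl maps by blast
    obtain g where g: "g \<in> Pset X \<delta>" "\<And>a. a \<in> \<Phi> ` Y \<Longrightarrow> g a = g0 a"
      using Pset_extension[of "\<Phi> ` Y" X \<delta> g0] \<open>finite Y\<close> \<open>Y \<noteq> {}\<close> maps refl triangle lip
      by blast
    have "cost_Y h = cost_Y (g \<circ> \<Phi>)"
      unfolding cost_Y_def using g0 g(2) by (intro sum.cong) auto
    then show "cost_Y h \<in> cost_X ` Pset X \<delta>" using cost_comp g(1) by simp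
  qed
  ultimately have "cost_X ` Pset X \<delta> = cost_Y ` Pset Y (\<lambda>x y. \<delta> (\<Phi> x) (\<Phi> y))"
    by (rule antisym)
  then show ?thesis unfolding dist_distr_def cost_X_def cost_Y_def by simp
qed

definition potential :: "(nat \<Rightarrow> real) \<Rightarrow> nat \<Rightarrow> real" where
  "potential v a = (\<Sum>t\<in>{1..<a}. v t)"

lemma sum_interval_eq_potential_diff:
  assumes "1 \<le> b" "b < a"
  shows "(\<Sum>t\<in>{b..a-1}. v t) = potential v a - potential v b"
proof -
  have "{b..a-1} = {b..<a}" using assms by auto
  moreover have "potential v a = potential v b + (\<Sum>t\<in>{b..<a}. v t)"
    unfolding potential_def using sum.atLeastLessThan_concat[of 1 b a v] assms by simp
  ultimately show ?thesis by simp
qed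

lemma dB_coordinate_eq_max:
  assumes lu: "\<And>t. t \<in> {1..n-1} \<Longrightarrow> l t < u t" and "a \<in> {1..n}" "b \<in> {1..n}"
  shows "(if b < a then \<Sum>t\<in>{b..a-1}. u t else 0) - (if a < b then \<Sum>t\<in>{a..b-1}. l t else 0)
       = max (potential u a - potential u b) (potential l a - potential l b)"
proof -
  have l_le_u: "(\<Sum>t\<in>{c..e-1}. l t) \<le> (\<Sum>t\<in>{c..e-1}. u t)" if "c \<in> {1..n}" "e \<in> {1..n}" for c e
    using that by (intro sum_mono less_imp_le lu) auto
  consider "b < a" | "a < b" | "a = b" by linarith
  then show ?thesis
  proof cases
    case 1
    then show ?thesis using l_le_u[of b a] assms(2,3)
        sum_interval_eq_potential_diff[of b a l] sum_interval_eq_potential_diff[of b a u] by auto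
  next
    case 2
    then show ?thesis using l_le_u[of a b] assms(2,3)
        sum_interval_eq_potential_diff[of a b l] sum_interval_eq_potential_diff[of a b u] by auto
  qed simp
qed

lemma dB_eq_sum_max_potential:
  assumes "bounding_family n l u" "x \<in> grid n" "y \<in> grid n"
  shows "dB l u x y = (\<Sum>r\<in>UNIV. max (potential (u r) (x r) - potential (u r) (y r))
                                       (potential (l r) (x r) - potential (l r) (y r)))"
proof -
  have "dB l u x y = (\<Sum>r\<in>UNIV. (if y r < x r then \<Sum>t\<in>{y r..x r-1}. u r t else 0)
                               - (if x r < y r then \<Sum>t\<in>{x r..y r-1}. l r t else 0))"
    unfolding dB_def sum_subtractf by (simp add: sum.inter_filter[symmetric])
  also have "\<dots> = (\<Sum>r\<in>UNIV. max (potential (u r) (x r) - potential (u r) (y r))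
                                   (potential (l r) (x r) - potential (l r) (y r)))"
  proof (rule sum.cong[OF refl])
    fix r
    show "(if y r < x r then \<Sum>t\<in>{y r..x r-1}. u r t else 0)
        - (if x r < y r then \<Sum>t\<in>{x r..y r-1}. l r t else 0)
        = max (potential (u r) (x r) - potential (u r) (y r))
              (potential (l r) (x r) - potential (l r) (y r))"
      using assms unfolding bounding_family_def grid_def by (intro dB_coordinate_eq_max[where n = n]) auto
  qed
  finally show ?thesis .
qed

lemma dB_self [simp]: "dB l u x x = 0"
  unfolding dB_def by simp

lemma dB_triangle:
  assumes "bounding_family n l u" "x \<in> grid n" "y \<in> grid n" "z \<in> grid n"
  shows "dB l u x z \<le> dB l u x y + dB l u y z"
  unfolding dB_eq_sum_max_potential[OF assms(1,2,4)] dB_eq_sum_max_potential[OF assms(1,2,3)]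
    dB_eq_sum_max_potential[OF assms(1,3,4)] sum.distrib[symmetric]
  by (intro sum_mono) linarith

definition cumulative :: "(nat \<Rightarrow> nat) \<Rightarrow> nat \<Rightarrow> nat" where
  "cumulative c k = (\<Sum>j\<in>{1..k}. c j)"

lemma cumulative_mono: "k \<le> m \<Longrightarrow> cumulative c k \<le> cumulative c m"
  unfolding cumulative_def by (intro sum_mono2) auto

lemma cumulative_pred: "1 \<le> k \<Longrightarrow> cumulative c k = cumulative c (k - 1) + c k"
  unfolding cumulative_def by (cases k) auto

lemma sum_atLeastLessThan_eq_cumulative: "(\<Sum>j\<in>{1..<k}. c j) = cumulative c (k - 1)"
  unfolding cumulative_def by (cases k) (auto simp: atLeastLessThanSuc_atLeastAtMost)

lemma cumulative_block_unique:
  assumes "cumulative c (k - 1) < t" "t \<le> cumulative c k"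
    and "cumulative c (m - 1) < t" "t \<le> cumulative c m"
  shows "k = m"
proof (rule ccontr)
  assume "k \<noteq> m"
  then have "k \<le> m - 1 \<or> m \<le> k - 1" by linarith
  then show False
    using assms cumulative_mono[of k "m - 1" c] cumulative_mono[of m "k - 1" c] by auto
qed

lemma cumulative_block_exists:
  assumes "0 < t" "t \<le> cumulative c n"
  obtains k where "k \<in> {1..n}" "cumulative c (k - 1) < t" "t \<le> cumulative c k"
proof -
  define k where "k = (LEAST k. t \<le> cumulative c k)"
  have "t \<le> cumulative c k" unfolding k_def using assms(2) by (rule LeastI)
  moreover have "k \<le> n" unfolding k_def using assms(2) by (rule Least_le)
  moreover have "k \<noteq> 0"
    using \<open>t \<le> cumulative c k\<close> assms(1) by (cases "k = 0") (auto simp: cumulative_def)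
  moreover have "\<not> t \<le> cumulative c (k - 1)"
    unfolding k_def by (rule not_less_Least) (use \<open>k \<noteq> 0\<close> k_def in auto)
  ultimately show thesis by (intro that) auto
qed

lemma phi_eq_iff:
  assumes "t \<in> {1..cumulative (q r) n}"
  shows "phi n q r t = k \<longleftrightarrow> k \<in> {1..n} \<and> cumulative (q r) (k - 1) < t \<and> t \<le> cumulative (q r) k"
proof -
  let ?block = "\<lambda>k. k \<in> {1..n} \<and> cumulative (q r) (k - 1) < t \<and> t \<le> cumulative (q r) k"
  obtain k0 where k0: "?block k0"
    using cumulative_block_exists[of t "q r" n] assms by auto
  have unique: "k = k0" if "?block k" for k
    using that k0 by (blast intro: cumulative_block_unique)
  have "phi n q r t = (THE k. ?block k)"
    unfolding phi_def cumulative_def[symmetric] sum_atLeastLessThan_eq_cumulative ..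
  also have "\<dots> = k0" using k0 unique by (rule the_equality)
  finally show ?thesis using k0 unique by blast
qed

lemma grid_eq_PiE: "grid n = PiE UNIV (\<lambda>_. {1..n})"
  unfolding grid_def by (auto simp: PiE_iff)

lemma finite_grid: "finite (grid n :: ('d::finite \<Rightarrow> nat) set)"
  unfolding grid_eq_PiE by (intro finite_PiE) auto

lemma Phi_in_grid:
  assumes "\<And>r. cumulative (q r) n = N" "y \<in> grid N"
  shows "Phi n q y \<in> grid n"
proof -
  have "phi n q r (y r) \<in> {1..n}" for r
    using phi_eq_iff[where t = "y r" and q = q and r = r and n = n and k = "phi n q r (y r)"] assms
    unfolding grid_def by auto
  then show ?thesis unfolding grid_def Phi_def by auto
qed

lemma Phi_fibre:
  assumes cum: "\<And>r. cumulative (q r) n = N" and "a \<in> grid n"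
  shows "{y\<in>grid N. Phi n q y = a}
       = PiE UNIV (\<lambda>r. {Suc (cumulative (q r) (a r - 1)) .. cumulative (q r) (a r)})"
proof -
  have a: "a r \<in> {1..n}" for r using \<open>a \<in> grid n\<close> unfolding grid_def by auto
  have phi_eq_a_iff: "phi n q r t = a r \<longleftrightarrow> t \<in> {Suc (cumulative (q r) (a r - 1)) .. cumulative (q r) (a r)}"
    if "t \<in> {1..N}" for r t
    using phi_eq_iff[where t = t and q = q and r = r and n = n and k = "a r"] that a[of r] cum[of r]
    by auto
  have block_le_N: "cumulative (q r) (a r) \<le> N" for r
    using cumulative_mono[of "a r" n "q r"] a[of r] cum[of r] by auto
  have "y \<in> grid N \<and> Phi n q y = a
      \<longleftrightarrow> (\<forall>r. y r \<in> {Suc (cumulative (q r) (a r - 1)) .. cumulative (q r) (a r)})" for y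
  proof
    assume "y \<in> grid N \<and> Phi n q y = a"
    then show "\<forall>r. y r \<in> {Suc (cumulative (q r) (a r - 1)) .. cumulative (q r) (a r)}"
      using phi_eq_a_iff unfolding grid_def Phi_def by auto
  next
    assume box: "\<forall>r. y r \<in> {Suc (cumulative (q r) (a r - 1)) .. cumulative (q r) (a r)}"
    then have "y \<in> grid N" using block_le_N unfolding grid_def by (auto intro: order_trans)
    moreover have "Phi n q y = a"
      using box phi_eq_a_iff \<open>y \<in> grid N\<close> unfolding grid_def Phi_def by auto
    ultimately show "y \<in> grid N \<and> Phi n q y = a" ..
  qed
  then show ?thesis by (auto simp: PiE_iff)
qed

lemma card_Phi_fibre:
  assumes "\<And>r. cumulative (q r) n = N" "a \<in> grid n"
  shows "card {y\<in>grid N. Phi n q y = a} = (\<Prod>r\<in>UNIV. q r (a r))"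
proof -
  have "1 \<le> a r" for r using \<open>a \<in> grid n\<close> unfolding grid_def by auto
  then show ?thesis
    unfolding Phi_fibre[OF assms] card_PiE[OF finite_UNIV]
    by (intro prod.cong refl) (simp add: cumulative_pred)
qed

lemma sum_uniform_weights_Phi:
  assumes cum: "\<And>r. cumulative (q r) n = N"
  shows "(\<Sum>y\<in>{y\<in>grid N. P (Phi n q y)}. uniform_weights N y)
       = (\<Sum>x\<in>{x\<in>grid n. P x}. prod_pmf_weights N q x)"
proof -
  have fibre_weight: "(\<Sum>y\<in>{y\<in>grid N. Phi n q y = x}. uniform_weights N y) = prod_pmf_weights N q x"
    if "x \<in> grid n" for x
    using card_Phi_fibre[OF cum that]
    by (simp add: uniform_weights_def prod_pmf_weights_def prod_dividef prod_constant)
  have "(\<Sum>y\<in>{y\<in>grid N. P (Phi n q y)}. uniform_weights N y)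
      = (\<Sum>x\<in>{x\<in>grid n. P x}. \<Sum>y\<in>{y. y \<in> {y\<in>grid N. P (Phi n q y)} \<and> Phi n q y = x}. uniform_weights N y)"
    using Phi_in_grid[OF cum] finite_grid
    by (intro sum.group[symmetric]) (auto intro: rev_finite_subset[OF finite_grid])
  also have "\<dots> = (\<Sum>x\<in>{x\<in>grid n. P x}. prod_pmf_weights N q x)"
  proof (intro sum.cong refl)
    fix x assume x: "x \<in> {x\<in>grid n. P x}"
    then have "{y. y \<in> {y\<in>grid N. P (Phi n q y)} \<and> Phi n q y = x} = {y\<in>grid N. Phi n q y = x}"
      by auto
    then show "(\<Sum>y\<in>{y. y \<in> {y\<in>grid N. P (Phi n q y)} \<and> Phi n q y = x}. uniform_weights N y)
        = prod_pmf_weights N q x"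
      using fibre_weight x by simp
  qed
  finally show ?thesis .
qed

theorem theorem3p8:
  fixes n N :: nat
    and l u :: "'d::finite \<Rightarrow> nat \<Rightarrow> real"
    and q :: "'d \<Rightarrow> nat \<Rightarrow> nat"
    and f :: "('d \<Rightarrow> nat) \<Rightarrow> real"
  assumes "bounding_family n l u"
    and "N > 0"
    and "\<And>r. (\<Sum>j\<in>{1..n}. q r j) = N"
  shows "dist_distr (grid n) (prod_pmf_weights N q) f (Pset (grid n) (dB l u))
       = dist_distr (grid N) (uniform_weights N) (f_ext n q f) (Pset (grid N) (d_ext n q l u))"
proof -
  have cum: "cumulative (q r) n = N" for r
    using assms(3) unfolding cumulative_def .
  have f_ext_eq: "f_ext n q f = f \<circ> Phi n q"
    and d_ext_eq: "d_ext n q l u = (\<lambda>x y. dB l u (Phi n q x) (Phi n q y))"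
    unfolding f_ext_def d_ext_def by auto
  have "(\<lambda>_. 1) \<in> grid N" using \<open>N > 0\<close> unfolding grid_def by auto
  then show ?thesis
    unfolding f_ext_eq d_ext_eq
    using Phi_in_grid[where q = q, OF cum] finite_grid dB_triangle[OF assms(1)]
      sum_uniform_weights_Phi[where q = q, OF cum]
    by (intro dist_distr_pullback) auto
qed

end
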